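(* Let $\lambda=(\lambda_1,\dots,\lambda_m)$ be an $m$-row shape. Then $$\xi(q)=\sum_k|S_k(\lambda)|q^k=\sum_{(i_1,\dots,i_{m-1})}\Big(|\mathcal D_\lambda(i_1,\dots,i_{m-1})|\prod_{j=1}^{m-1}[j+1]_q^{\,i_j}\Big),$$ the sum ranging over all tuples of nonnegative integers.
   Context: $\lambda_1\ge\dots\ge\lambda_m\ge1$, $N=\sum\lambda_i$. A row-standard filling of shape $\lambda$ uses $1,\dots,N$ once each with rows strictly increasing left to right. Inversion pairs of a row-standard $\tau$: for a box $c$ and $r\ge1$ let $c^{(r)}$ be the box $r$ positions to its right, if it exists. For distinct boxes $c,c'$ in the same column with $\tau(c)<\tau(c')$, let $r\ge1$ be least such that one of $c^{(r)},c'^{(r)}$ does not exist or $\tau(c^{(r)})\ne\tau(c'^{(r)})$; $(c,c')$ is an inversion pair if either (one does not exist and $c$ lies below $c'$) or (both exist and $\tau(c^{(r)})>\tau(c'^{(r)})$). $S_k(\lambda)$: row-standard fillings of shape $\lambda$ with exactly $k$ inversion pairs. An $m$-dimensional Dyck path of shape $\lambda$ is a sequence $v_0,\dots,v_N\in\mathbb Z^m$ with $v_0=0$, $v_N=(\lambda_1,\dots,\lambda_m)$, each $v_i-v_{i-1}=\hat e_\gamma$ for some $\gamma$ (a "$\gamma$-step"), and every $v_i=(x_1,\dots,x_m)$ satisfying $x_1\ge\dots\ge x_m$; $\mathcal D_\lambda$ is their set. If step $k$ is a $\gamma$-step and $v_k=(x'_1,\dots,x'_m)$, let $d\ge0$ be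 the largest integer with $x'_{\gamma-d}=\dots=x'_\gamma$; $P$ has a $d$-degree return to ground at $v_k$. $\mathcal D_\lambda(i_1,\dots,i_{m-1})$ is the set of $P\in\mathcal D_\lambda$ having, for each $1\le d\le m-1$, exactly $i_d$ indices $k\in\{1,\dots,N\}$ at which $P$ has a $d$-degree return to ground. $[p]_q=1+q+\dots+q^{p-1}$. *)

theory Defs
  imports "HOL-Computational_Algebra.Polynomial"
begin

(* Shapes: lam :: nat list = [lambda_1,...,lambda_m] (0-indexed in Isabelle).
   Boxes: (i,j) with i < m (row, row 0 = top = longest row), j < lam!i (column). *)

definition is_shape :: "nat list \<Rightarrow> bool" where
  "is_shape lam \<longleftrightarrow> lam \<noteq> [] \<and> (\<forall>i j. i \<le> j \<longrightarrow> j < length lam \<longrightarrow> lam ! j \<le> lam ! i)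
                   \<and> (\<forall>i < length lam. 1 \<le> lam ! i)"

definition boxes :: "nat list \<Rightarrow> (nat \<times> nat) set" where
  "boxes lam = {(i, j). i < length lam \<and> j < lam ! i}"

definition size_of :: "nat list \<Rightarrow> nat" where
  "size_of lam = sum_list lam"

definition row_standard :: "nat list \<Rightarrow> (nat \<times> nat \<Rightarrow> nat) \<Rightarrow> bool" where
  "row_standard lam tau \<longleftrightarrow>
     bij_betw tau (boxes lam) {1..size_of lam}
   \<and> (\<forall>i j j'. (i, j) \<in> boxes lam \<longrightarrow> (i, j') \<in> boxes lam \<longrightarrow> j < j' \<longrightarrow> tau (i, j) < tau (i, j'))
   \<and> (\<forall>c. c \<notin> boxes lam \<longrightarrow> tau c = 0)"

definition right_of :: "nat \<times> nat \<Rightarrow> nat \<Rightarrow> nat \<times> nat" where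
  "right_of c r = (fst c, snd c + r)"

definition first_diff :: "nat list \<Rightarrow> (nat \<times> nat \<Rightarrow> nat) \<Rightarrow> nat \<times> nat \<Rightarrow> nat \<times> nat \<Rightarrow> nat" where
  "first_diff lam tau c c' = (LEAST r. 1 \<le> r \<and>
      (right_of c r \<notin> boxes lam \<or> right_of c' r \<notin> boxes lam
       \<or> tau (right_of c r) \<noteq> tau (right_of c' r)))"

(* "c lies below c'" means c is in a row with larger index than c' *)
definition inversion_pair :: "nat list \<Rightarrow> (nat \<times> nat \<Rightarrow> nat) \<Rightarrow> nat \<times> nat \<Rightarrow> nat \<times> nat \<Rightarrow> bool" where
  "inversion_pair lam tau c c' \<longleftrightarrow>
     c \<in> boxes lam \<and> c' \<in> boxes lam \<and> c \<noteq> c' \<and> snd c = snd c' \<and> tau c < tau c' \<and>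
     (let r = first_diff lam tau c c' in
       ((right_of c r \<notin> boxes lam \<or> right_of c' r \<notin> boxes lam) \<and> fst c' < fst c)
     \<or> (right_of c r \<in> boxes lam \<and> right_of c' r \<in> boxes lam
         \<and> tau (right_of c' r) < tau (right_of c r)))"

definition inv_count :: "nat list \<Rightarrow> (nat \<times> nat \<Rightarrow> nat) \<Rightarrow> nat" where
  "inv_count lam tau = card {(c, c'). inversion_pair lam tau c c'}"

definition S :: "nat list \<Rightarrow> nat \<Rightarrow> (nat \<times> nat \<Rightarrow> nat) set" where
  "S lam k = {tau. row_standard lam tau \<and> inv_count lam tau = k}"

(* m-dimensional Dyck paths: lists [v_0,...,v_N] of integer vectors of length m *)
definition unit_step :: "int list \<Rightarrow> int list \<Rightarrow> nat \<Rightarrow> bool" where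
  "unit_step v w g \<longleftrightarrow> g < length v \<and> w = v[g := v ! g + 1]"

definition dyck_paths :: "nat list \<Rightarrow> int list list set" where
  "dyck_paths lam = {P. length P = size_of lam + 1
     \<and> P ! 0 = replicate (length lam) 0
     \<and> P ! size_of lam = map int lam
     \<and> (\<forall>k. 1 \<le> k \<longrightarrow> k \<le> size_of lam \<longrightarrow> (\<exists>g. unit_step (P ! (k - 1)) (P ! k) g))
     \<and> (\<forall>v \<in> set P. length v = length lam
          \<and> (\<forall>i j. i \<le> j \<longrightarrow> j < length lam \<longrightarrow> v ! j \<le> v ! i))}"

(* the direction gamma (0-indexed) of step k *)
definition step_dir :: "int list list \<Rightarrow> nat \<Rightarrow> nat" where
  "step_dir P k = (THE g. unit_step (P ! (k - 1)) (P ! k) g)"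

definition return_degree :: "int list list \<Rightarrow> nat \<Rightarrow> nat" where
  "return_degree P k = (let g = step_dir P k; x = P ! k in
      GREATEST d. d \<le> g \<and> (\<forall>t \<le> d. x ! (g - t) = x ! g))"

(* D_lam(i_1,...,i_{m-1}); the tuple is the list is = [i_1,...,i_{m-1}] *)
definition D_ret :: "nat list \<Rightarrow> nat list \<Rightarrow> int list list set" where
  "D_ret lam is = {P \<in> dyck_paths lam. \<forall>d \<in> {1..length lam - 1}.
      card {k \<in> {1..size_of lam}. return_degree P k = d} = is ! (d - 1)}"

definition qint :: "nat \<Rightarrow> int poly" where
  "qint p = (\<Sum>i<p. monom 1 i)"

end

theory Submission
  imports Defs
begin

(* Both sides are generating polynomials, over Dyck paths with weight \<Prod>[deg + 1]_q and over
   row-standard fillings with weight q^inv, and both obey the same recursion on the shape.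

   The last step of a Dyck path of shape lam goes in a direction g whose removal leaves a weakly
   decreasing shape lam - e_g; its return to ground has degree d, the number of rows directly
   above g of the same length as g, and contributes [d + 1]_q.

   In a row-standard filling the entry N sits at the end of some row s. Deleting it and moving the
   shortened row s to the bottom g of its block of equal rows gives a filling of the same shape
   lam - e_g. Since entries are distinct, inversion pairs only depend on right neighbours, and one
   checks that exactly the g - s pairs formed by N with the boxes below it in that block are lost.
   The rows s of the block are g - d, ..., g, so summing q^(g - s) again gives [d + 1]_q. *)

definition weakly_decreasing :: "nat list \<Rightarrow> bool" where
  "weakly_decreasing lam \<longleftrightarrow> (\<forall>i j. i \<le> j \<longrightarrow> j < length lam \<longrightarrow> lam ! j \<le> lam ! i)"

definition row_standard_fillings :: "nat list \<Rightarrow> (nat \<times> nat \<Rightarrow> nat) set" where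
  "row_standard_fillings lam = {tau. row_standard lam tau}"

definition inversion_gf :: "nat list \<Rightarrow> int poly" where
  "inversion_gf lam = (\<Sum>tau\<in>row_standard_fillings lam. monom 1 (inv_count lam tau))"

definition dyck_gf :: "nat list \<Rightarrow> int poly" where
  "dyck_gf lam = (\<Sum>P\<in>dyck_paths lam. \<Prod>k\<in>{1..size_of lam}. qint (return_degree P k + 1))"

definition remove_box :: "nat list \<Rightarrow> nat \<Rightarrow> nat list" where
  "remove_box lam g = lam[g := lam ! g - 1]"

definition removable_rows :: "nat list \<Rightarrow> nat set" where
  "removable_rows lam = {g. g < length lam \<and> 0 < lam ! g \<and> weakly_decreasing (remove_box lam g)}"

text \<open>The degree of the return to ground of a step in direction \<open>g\<close> that ends at \<open>lam\<close>.\<close>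

definition corner_degree :: "nat list \<Rightarrow> nat \<Rightarrow> nat" where
  "corner_degree lam g = (GREATEST d. d \<le> g \<and> (\<forall>t\<le>d. map int lam ! (g - t) = map int lam ! g))"

lemma weakly_decreasingD:
  "weakly_decreasing lam \<Longrightarrow> i \<le> j \<Longrightarrow> j < length lam \<Longrightarrow> lam ! j \<le> lam ! i"
  unfolding weakly_decreasing_def by blast

lemma mem_boxes: "(i, j) \<in> boxes lam \<longleftrightarrow> i < length lam \<and> j < lam ! i"
  unfolding boxes_def by simp

lemma finite_boxes: "finite (boxes lam)"
proof -
  have "boxes lam \<subseteq> {..<length lam} \<times> {..<sum_list lam + 1}"
    unfolding boxes_def using elem_le_sum_list[of _ lam] by fastforce
  then show ?thesis by (rule finite_subset) auto
qed

lemma size_of_remove_box: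
  "g < length lam \<Longrightarrow> 0 < lam ! g \<Longrightarrow> size_of (remove_box lam g) = size_of lam - 1"
  unfolding size_of_def remove_box_def by (simp add: sum_list_update)

lemma length_remove_box [simp]: "length (remove_box lam g) = length lam"
  unfolding remove_box_def by simp

lemma finite_removable_rows: "finite (removable_rows lam)"
  by (rule finite_subset[of _ "{..<length lam}"]) (auto simp: removable_rows_def)

lemma size_of_eq_0_nth: "size_of lam = 0 \<Longrightarrow> i < length lam \<Longrightarrow> lam ! i = 0"
  unfolding size_of_def by (simp add: sum_list_eq_0_iff)

lemma qint_1 [simp]: "qint (Suc 0) = 1"
  unfolding qint_def by (simp add: one_poly_def monom_0 pCons_one)

lemma prod_comp_eq_prod_power_card:
  assumes "finite K" "finite D" "h ` K \<subseteq> D"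
  shows "(\<Prod>k\<in>K. f (h k)) = (\<Prod>d\<in>D. f d ^ card {k\<in>K. h k = d})"
proof -
  have "(\<Prod>k\<in>K. f (h k)) = (\<Prod>d\<in>D. \<Prod>k\<in>{k\<in>K. h k = d}. f (h k))"
    using prod.group[OF assms, of "\<lambda>k. f (h k)"] by simp
  also have "\<dots> = (\<Prod>d\<in>D. f d ^ card {k\<in>K. h k = d})"
  proof (intro prod.cong refl)
    fix d
    have "(\<Prod>k\<in>{k\<in>K. h k = d}. f (h k)) = (\<Prod>k\<in>{k\<in>K. h k = d}. f d)"
      by (rule prod.cong) auto
    then show "(\<Prod>k\<in>{k\<in>K. h k = d}. f (h k)) = f d ^ card {k\<in>K. h k = d}"
      by (simp only: prod_constant)
  qed
  finally show ?thesis .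
qed

subsection \<open>Dyck paths\<close>

lemma unit_step_unique: "unit_step v w g1 \<Longrightarrow> unit_step v w g2 \<Longrightarrow> g1 = g2"
  unfolding unit_step_def
  by (metis add_cancel_left_right nth_list_update_eq nth_list_update_neq one_neq_zero)

lemma step_dir_eqI: "unit_step (P ! (k - 1)) (P ! k) g \<Longrightarrow> step_dir P k = g"
  unfolding step_dir_def using unit_step_unique by blast

lemma return_degree_le_step_dir:
  assumes "unit_step (P ! (k - 1)) (P ! k) g"
  shows "return_degree P k \<le> g"
proof -
  let ?Q = "\<lambda>d. d \<le> g \<and> (\<forall>t \<le> d. P ! k ! (g - t) = P ! k ! g)"
  have "?Q (Greatest ?Q)" by (rule GreatestI_nat[of _ 0 g]) auto
  then show ?thesis unfolding return_degree_def step_dir_eqI[OF assms] Let_def by simp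
qed

lemma return_degree_cong:
  "P ! (k - 1) = Q ! (k - 1) \<Longrightarrow> P ! k = Q ! k \<Longrightarrow> return_degree P k = return_degree Q k"
  unfolding return_degree_def step_dir_def by simp

lemma unit_step_remove_box:
  assumes "g < length lam" "0 < lam ! g"
  shows "unit_step (map int (remove_box lam g)) (map int lam) g"
proof -
  have "map int lam = (map int (remove_box lam g))[g := map int (remove_box lam g) ! g + 1]"
    by (rule nth_equalityI) (use assms in \<open>auto simp: remove_box_def nth_list_update of_nat_diff\<close>)
  then show ?thesis unfolding unit_step_def using assms by simp
qed

lemma dyck_pathsD:
  assumes "P \<in> dyck_paths lam"
  shows "length P = size_of lam + 1" "P ! 0 = replicate (length lam) 0"
    "P ! size_of lam = map int lam"
    "v \<in> set P \<Longrightarrow> length v = length lam"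
    "v \<in> set P \<Longrightarrow> i \<le> j \<Longrightarrow> j < length lam \<Longrightarrow> v ! j \<le> v ! i"
  using assms unfolding dyck_paths_def by blast+

lemma dyck_paths_nth:
  assumes "P \<in> dyck_paths lam" "k \<le> size_of lam"
  shows "length (P ! k) = length lam" "i \<le> j \<Longrightarrow> j < length lam \<Longrightarrow> P ! k ! j \<le> P ! k ! i"
  using assms dyck_pathsD[OF assms(1)] by (simp_all add: nth_mem)

lemma dyck_paths_step:
  assumes "P \<in> dyck_paths lam" "1 \<le> k" "k \<le> size_of lam"
  obtains g where "unit_step (P ! (k - 1)) (P ! k) g" "g < length lam"
proof -
  obtain g where u: "unit_step (P ! (k - 1)) (P ! k) g"
    using assms unfolding dyck_paths_def by blast
  moreover have "length (P ! (k - 1)) = length lam" using dyck_paths_nth assms by simp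
  ultimately show ?thesis using that unfolding unit_step_def by simp
qed

lemma return_degree_bound:
  assumes "P \<in> dyck_paths lam" "k \<in> {1..size_of lam}"
  shows "return_degree P k \<le> length lam - 1"
proof -
  from assms(2) have "1 \<le> k" "k \<le> size_of lam" by auto
  then obtain g where "unit_step (P ! (k - 1)) (P ! k) g" "g < length lam"
    by (rule dyck_paths_step[OF assms(1)])
  then show ?thesis using return_degree_le_step_dir by fastforce
qed

lemma dyck_paths_nonneg:
  assumes P: "P \<in> dyck_paths lam"
  shows "k \<le> size_of lam \<Longrightarrow> i < length lam \<Longrightarrow> 0 \<le> P ! k ! i"
proof (induction k)
  case 0
  then show ?case using dyck_pathsD(2)[OF P] by auto
next
  case (Suc k)
  obtain g where "unit_step (P ! k) (P ! Suc k) g"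
    using dyck_paths_step[OF P, of "Suc k"] Suc.prems by auto
  moreover have "0 \<le> P ! k ! i" "length (P ! k) = length lam"
    using Suc dyck_paths_nth[OF P] by auto
  ultimately show ?case using Suc.prems unfolding unit_step_def by (cases "i = g") auto
qed

lemma dyck_paths_size_0:
  assumes "size_of lam = 0"
  shows "dyck_paths lam = {[replicate (length lam) 0]}"
proof (intro equalityI subsetI)
  fix P assume P: "P \<in> dyck_paths lam"
  then have "length P = 1" "P ! 0 = replicate (length lam) 0" using dyck_pathsD[OF P] assms by auto
  then show "P \<in> {[replicate (length lam) 0]}" by (cases P) auto
next
  fix P assume "P \<in> {[replicate (length lam) (0::int)]}"
  moreover have "map int lam = replicate (length lam) 0"
    by (rule nth_equalityI) (use size_of_eq_0_nth[OF assms] in auto)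
  ultimately show "P \<in> dyck_paths lam" unfolding dyck_paths_def using assms by auto
qed

lemma dyck_paths_last_step:
  assumes P: "P \<in> dyck_paths lam" and sz: "size_of lam = Suc n"
  obtains g where "g \<in> removable_rows lam" "P ! n = map int (remove_box lam g)"
proof -
  obtain g where u: "unit_step (P ! n) (P ! Suc n) g" and g: "g < length lam"
    using dyck_paths_step[OF P, of "Suc n"] sz by auto
  let ?v = "P ! n"
  have lv: "length ?v = length lam" using dyck_paths_nth[OF P] sz by auto
  have eq: "map int lam = ?v[g := ?v ! g + 1]"
    using u dyck_pathsD(3)[OF P] sz unfolding unit_step_def by simp
  have "map int lam ! g = ?v ! g + 1" "0 \<le> ?v ! g"
    using eq g lv dyck_paths_nonneg[OF P, of n g] sz by auto
  then have pos: "0 < lam ! g" using g by simp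
  have veq: "?v = map int (remove_box lam g)"
  proof (rule nth_equalityI)
    fix i assume "i < length ?v"
    then have "map int lam ! i = (if i = g then ?v ! g + 1 else ?v ! i)" using eq lv by simp
    then show "?v ! i = map int (remove_box lam g) ! i"
      using \<open>i < length ?v\<close> lv pos
      by (cases "i = g") (auto simp: remove_box_def nth_list_update of_nat_diff)
  qed (use lv in simp)
  have "weakly_decreasing (remove_box lam g)"
    unfolding weakly_decreasing_def
  proof (intro allI impI)
    fix i j assume ij: "i \<le> j" "j < length (remove_box lam g)"
    then have "?v ! j \<le> ?v ! i" using dyck_paths_nth(2)[OF P, of n i j] sz by simp
    then show "remove_box lam g ! j \<le> remove_box lam g ! i" using ij unfolding veq by simp
  qed
  then have "g \<in> removable_rows lam" unfolding removable_rows_def using g pos by simp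
  then show ?thesis using that veq by blast
qed

lemma dyck_paths_butlast:
  assumes P: "P \<in> dyck_paths lam" and sz: "size_of lam = Suc n"
    and lam': "size_of lam' = n" "length lam' = length lam" "P ! n = map int lam'"
  shows "butlast P \<in> dyck_paths lam'"
proof -
  have lenP: "length P = Suc (Suc n)" using dyck_pathsD(1)[OF P] sz by simp
  show ?thesis
    unfolding dyck_paths_def
  proof (intro CollectI conjI allI impI ballI)
    show "length (butlast P) = size_of lam' + 1" using lenP lam' by simp
    show "butlast P ! 0 = replicate (length lam') 0"
      using dyck_pathsD(2)[OF P] lenP lam' by (simp add: nth_butlast)
    show "butlast P ! size_of lam' = map int lam'" using lenP lam' by (simp add: nth_butlast)
  next
    fix k assume k: "1 \<le> k" "k \<le> size_of lam'"
    then obtain g where "unit_step (P ! (k - 1)) (P ! k) g"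
      using dyck_paths_step[OF P, of k] lam' sz by auto
    then show "\<exists>g. unit_step (butlast P ! (k - 1)) (butlast P ! k) g"
      using k lam' lenP by (auto simp: nth_butlast)
  next
    fix v assume "v \<in> set (butlast P)"
    then have "v \<in> set P" by (rule in_set_butlastD)
    then show "length v = length lam'"
      and "\<And>i j. i \<le> j \<Longrightarrow> j < length lam' \<Longrightarrow> v ! j \<le> v ! i"
      using dyck_pathsD(4,5)[OF P] lam' by auto
  qed
qed

lemma dyck_paths_snoc:
  assumes lam: "weakly_decreasing lam" and gR: "g \<in> removable_rows lam"
    and P': "P' \<in> dyck_paths (remove_box lam g)"
  shows "P' @ [map int lam] \<in> dyck_paths lam"
proof -
  have g: "g < length lam" and pos: "0 < lam ! g" using gR unfolding removable_rows_def by auto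
  define n where "n = size_of (remove_box lam g)"
  have "0 < size_of lam" using elem_le_sum_list[of g lam] g pos unfolding size_of_def by simp
  then have sz: "size_of lam = Suc n" using size_of_remove_box[OF g pos] n_def by simp
  have lenP': "length P' = Suc n" and lastP': "P' ! n = map int (remove_box lam g)"
    using dyck_pathsD(1,3)[OF P'] n_def by simp_all
  show ?thesis
    unfolding dyck_paths_def
  proof (intro CollectI conjI allI impI ballI)
    show "length (P' @ [map int lam]) = size_of lam + 1" using lenP' sz by simp
    show "(P' @ [map int lam]) ! 0 = replicate (length lam) 0"
      using dyck_pathsD(2)[OF P'] lenP' by (simp add: nth_append)
    show "(P' @ [map int lam]) ! size_of lam = map int lam" using lenP' sz by (simp add: nth_append)
  next
    fix k assume k: "1 \<le> k" "k \<le> size_of lam"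
    show "\<exists>g. unit_step ((P' @ [map int lam]) ! (k - 1)) ((P' @ [map int lam]) ! k) g"
    proof (cases "k \<le> n")
      case True
      then obtain g' where "unit_step (P' ! (k - 1)) (P' ! k) g'"
        using dyck_paths_step[OF P', of k] k n_def by auto
      then show ?thesis using True k lenP' by (auto simp: nth_append)
    next
      case False
      then have "k = Suc n" using k sz by simp
      then show ?thesis
        using unit_step_remove_box[OF g pos] lenP' lastP' by (auto simp: nth_append)
    qed
  next
    fix v assume v: "v \<in> set (P' @ [map int lam])"
    then show "length v = length lam" using dyck_pathsD(4)[OF P'] by auto
    fix i j assume "i \<le> j" "j < length lam"
    then show "v ! j \<le> v ! i" using v dyck_pathsD(5)[OF P'] weakly_decreasingD[OF lam] by auto
  qed
qed

lemma dyck_paths_decomp: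
  assumes "weakly_decreasing lam" "size_of lam = Suc n"
  shows "dyck_paths lam
    = (\<Union>g\<in>removable_rows lam. (\<lambda>P. P @ [map int lam]) ` dyck_paths (remove_box lam g))"
proof (intro equalityI subsetI)
  fix P assume P: "P \<in> dyck_paths lam"
  obtain g where g: "g \<in> removable_rows lam" and last: "P ! n = map int (remove_box lam g)"
    using dyck_paths_last_step[OF P assms(2)] .
  then have "butlast P \<in> dyck_paths (remove_box lam g)"
    using dyck_paths_butlast[OF P assms(2)] size_of_remove_box[of g lam] assms(2)
    unfolding removable_rows_def by simp
  moreover have "P = butlast P @ [map int lam]"
  proof -
    have "P \<noteq> []" using dyck_pathsD(1)[OF P] by auto
    moreover have "last P = map int lam"
      using dyck_pathsD(1,3)[OF P] assms(2) \<open>P \<noteq> []\<close> by (simp add: last_conv_nth)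
    ultimately show ?thesis using append_butlast_last_id[of P] by simp
  qed
  ultimately show "P \<in> (\<Union>g\<in>removable_rows lam. (\<lambda>P. P @ [map int lam]) ` dyck_paths (remove_box lam g))"
    using g by blast
qed (auto intro: dyck_paths_snoc[OF assms(1)])

lemma finite_dyck_paths: "weakly_decreasing lam \<Longrightarrow> finite (dyck_paths lam)"
proof (induction "size_of lam" arbitrary: lam)
  case 0
  then show ?case using dyck_paths_size_0 by simp
next
  case (Suc n)
  have "finite (dyck_paths (remove_box lam g))" if "g \<in> removable_rows lam" for g
    using that Suc size_of_remove_box unfolding removable_rows_def by auto
  then show ?case
    using dyck_paths_decomp[OF Suc(3) Suc(2)[symmetric]] finite_removable_rows by auto
qed

lemma return_degree_snoc:
  "1 \<le> k \<Longrightarrow> k < length P' \<Longrightarrow> return_degree (P' @ [v]) k = return_degree P' k"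
  by (rule return_degree_cong) (auto simp: nth_append)

lemma return_degree_snoc_last:
  assumes P': "P' \<in> dyck_paths (remove_box lam g)" and gR: "g \<in> removable_rows lam"
    and sz: "size_of lam = Suc n"
  shows "return_degree (P' @ [map int lam]) (Suc n) = corner_degree lam g"
proof -
  have g: "g < length lam" and pos: "0 < lam ! g" using gR unfolding removable_rows_def by auto
  have szg: "size_of (remove_box lam g) = n" using size_of_remove_box[OF g pos] sz by simp
  have lenP': "length P' = Suc n" and lastP': "P' ! n = map int (remove_box lam g)"
    using dyck_pathsD(1,3)[OF P'] szg by simp_all
  have last: "(P' @ [map int lam]) ! Suc n = map int lam" using lenP' by (simp add: nth_append)
  have "step_dir (P' @ [map int lam]) (Suc n) = g"
    by (rule step_dir_eqI) (use lenP' lastP' unit_step_remove_box[OF g pos] in \<open>simp add: nth_append\<close>)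
  then show ?thesis unfolding return_degree_def corner_degree_def Let_def last by simp
qed

lemma dyck_gf_size_0: "size_of lam = 0 \<Longrightarrow> dyck_gf lam = 1"
  unfolding dyck_gf_def by (simp add: dyck_paths_size_0)

lemma dyck_paths_remove_box_nth_last:
  assumes "g \<in> removable_rows lam" "size_of lam = Suc n" "P \<in> dyck_paths (remove_box lam g)"
  shows "P ! n = map int (remove_box lam g)"
  using dyck_pathsD(3)[OF assms(3)] size_of_remove_box[of g lam] assms(1,2)
  unfolding removable_rows_def by simp

lemma disjoint_dyck_paths_snoc:
  assumes sz: "size_of lam = Suc n"
    and g: "g1 \<in> removable_rows lam" "g2 \<in> removable_rows lam" "g1 \<noteq> g2"
  shows "(\<lambda>P. P @ [v]) ` dyck_paths (remove_box lam g1) \<inter> (\<lambda>P. P @ [v]) ` dyck_paths (remove_box lam g2)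
    = {}"
proof -
  have "map int (remove_box lam g1) ! g1 \<noteq> map int (remove_box lam g2) ! g1"
    using g unfolding removable_rows_def remove_box_def by auto
  then have "map int (remove_box lam g1) \<noteq> map int (remove_box lam g2)" by metis
  then have "P1 \<noteq> P2" if "P1 \<in> dyck_paths (remove_box lam g1)" "P2 \<in> dyck_paths (remove_box lam g2)"
    for P1 P2
    using dyck_paths_remove_box_nth_last[OF g(1) sz that(1)]
      dyck_paths_remove_box_nth_last[OF g(2) sz that(2)] by auto
  then show ?thesis by auto
qed

lemma sum_dyck_paths_snoc:
  assumes gR: "g \<in> removable_rows lam" and sz: "size_of lam = Suc n"
  shows "(\<Sum>P\<in>(\<lambda>P. P @ [map int lam]) ` dyck_paths (remove_box lam g).
      \<Prod>k\<in>{1..size_of lam}. qint (return_degree P k + 1))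
    = qint (corner_degree lam g + 1) * dyck_gf (remove_box lam g)"
proof -
  have szg: "size_of (remove_box lam g) = n"
    using size_of_remove_box[of g lam] gR sz unfolding removable_rows_def by simp
  have "(\<Prod>k\<in>{1..size_of lam}. qint (return_degree (P @ [map int lam]) k + 1))
      = qint (corner_degree lam g + 1) * (\<Prod>k\<in>{1..n}. qint (return_degree P k + 1))"
    if P: "P \<in> dyck_paths (remove_box lam g)" for P
  proof -
    have "length P = Suc n" using dyck_pathsD(1)[OF P] szg by simp
    then have "(\<Prod>k\<in>{1..n}. qint (return_degree (P @ [map int lam]) k + 1))
        = (\<Prod>k\<in>{1..n}. qint (return_degree P k + 1))"
      by (intro prod.cong refl) (simp add: return_degree_snoc)
    then show ?thesis
      unfolding sz by (simp add: prod.nat_ivl_Suc' return_degree_snoc_last[OF P gR sz])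
  qed
  then show ?thesis
    unfolding dyck_gf_def szg sum_distrib_left by (subst sum.reindex) (auto simp: inj_on_def)
qed

lemma dyck_gf_rec:
  assumes lam: "weakly_decreasing lam" and sz: "size_of lam = Suc n"
  shows "dyck_gf lam
    = (\<Sum>g\<in>removable_rows lam. qint (corner_degree lam g + 1) * dyck_gf (remove_box lam g))"
proof -
  have "finite ((\<lambda>P. P @ [map int lam]) ` dyck_paths (remove_box lam g))"
    if "g \<in> removable_rows lam" for g
    using that unfolding removable_rows_def by (intro finite_imageI finite_dyck_paths) simp
  then have "dyck_gf lam = (\<Sum>g\<in>removable_rows lam.
      \<Sum>P\<in>(\<lambda>P. P @ [map int lam]) ` dyck_paths (remove_box lam g).
        \<Prod>k\<in>{1..size_of lam}. qint (return_degree P k + 1))"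
    unfolding dyck_gf_def[of lam] dyck_paths_decomp[OF lam sz]
    by (intro sum.UNION_disjoint finite_removable_rows) (auto simp: disjoint_dyck_paths_snoc[OF sz])
  also have "\<dots> = (\<Sum>g\<in>removable_rows lam. qint (corner_degree lam g + 1) * dyck_gf (remove_box lam g))"
    by (intro sum.cong refl sum_dyck_paths_snoc[OF _ sz])
  finally show ?thesis .
qed

definition return_counts :: "nat list \<Rightarrow> int list list \<Rightarrow> nat list" where
  "return_counts lam P = map (\<lambda>d. card {k \<in> {1..size_of lam}. return_degree P k = d}) [1..<length lam]"

lemma nth_return_counts:
  "d \<in> {1..length lam - 1} \<Longrightarrow>
     return_counts lam P ! (d - 1) = card {k \<in> {1..size_of lam}. return_degree P k = d}"
  unfolding return_counts_def by (subst nth_map) auto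

lemma D_ret_eq_return_counts:
  assumes "length is = length lam - 1"
  shows "D_ret lam is = {P \<in> dyck_paths lam. return_counts lam P = is}"
proof -
  have "(\<forall>d \<in> {1..length lam - 1}. card {k \<in> {1..size_of lam}. return_degree P k = d} = is ! (d - 1))
        \<longleftrightarrow> return_counts lam P = is" for P
  proof
    assume "\<forall>d \<in> {1..length lam - 1}. card {k \<in> {1..size_of lam}. return_degree P k = d} = is ! (d - 1)"
    then show "return_counts lam P = is"
      using assms nth_return_counts[of "Suc _" lam P]
      by (intro nth_equalityI) (auto simp: return_counts_def)
  qed (use nth_return_counts in auto)
  then show ?thesis unfolding D_ret_def by blast
qed

lemma prod_return_counts:
  assumes "P \<in> dyck_paths lam"
  shows "(\<Prod>j = 1..length lam - 1. qint (j + 1) ^ (return_counts lam P ! (j - 1)))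
       = (\<Prod>k\<in>{1..size_of lam}. qint (return_degree P k + 1))"
proof -
  let ?m = "length lam"
  let ?c = "\<lambda>d. card {k\<in>{1..size_of lam}. return_degree P k = d}"
  have "(\<Prod>k\<in>{1..size_of lam}. qint (return_degree P k + 1)) = (\<Prod>d\<in>{0..?m-1}. qint (d+1) ^ ?c d)"
    by (rule prod_comp_eq_prod_power_card) (use return_degree_bound[OF assms] in auto)
  also have "{0..?m-1} = insert 0 {1..?m-1}" by auto
  also have "(\<Prod>d\<in>insert 0 {1..?m-1}. qint (d+1) ^ ?c d) = (\<Prod>d\<in>{1..?m-1}. qint (d+1) ^ ?c d)"
    by simp
  also have "\<dots> = (\<Prod>j = 1..length lam - 1. qint (j + 1) ^ (return_counts lam P ! (j - 1)))"
    by (intro prod.cong refl) (simp only: nth_return_counts)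
  finally show ?thesis by (rule sym)
qed

lemma sum_D_ret_eq_dyck_gf:
  assumes fin: "finite (dyck_paths lam)"
  shows "(\<Sum>is \<in> {is. length is = length lam - 1 \<and> (\<forall>x \<in> set is. x \<le> size_of lam)}.
           of_nat (card (D_ret lam is)) * (\<Prod>j = 1..length lam - 1. qint (j + 1) ^ (is ! (j - 1))))
       = dyck_gf lam"
proof -
  let ?T = "{is. length is = length lam - 1 \<and> (\<forall>x \<in> set is. x \<le> size_of lam)}"
  let ?F = "\<lambda>is. (\<Prod>j = 1..length lam - 1. qint (j + 1) ^ (is ! (j - 1)))"
  have finT: "finite ?T"
    by (rule finite_subset[of _ "{xs. set xs \<subseteq> {0..size_of lam} \<and> length xs = length lam - 1}"])
       (auto intro: finite_lists_length_eq)
  have "card {k \<in> {1..size_of lam}. return_degree P k = d} \<le> card {1..size_of lam}" for P d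
    by (rule card_mono) auto
  then have "card {k \<in> {1..size_of lam}. return_degree P k = d} \<le> size_of lam" for P d
    by (metis card_atLeastAtMost diff_Suc_1)
  then have sub: "return_counts lam ` dyck_paths lam \<subseteq> ?T"
    unfolding return_counts_def by auto
  have "(\<Sum>is\<in>?T. of_nat (card (D_ret lam is)) * ?F is)
      = (\<Sum>is\<in>?T. \<Sum>P\<in>{P \<in> dyck_paths lam. return_counts lam P = is}. ?F (return_counts lam P))"
    by (intro sum.cong refl) (simp add: D_ret_eq_return_counts)
  also have "\<dots> = (\<Sum>P\<in>dyck_paths lam. ?F (return_counts lam P))"
    by (rule sum.group[OF fin finT sub])
  also have "\<dots> = dyck_gf lam" unfolding dyck_gf_def by (intro sum.cong refl prod_return_counts)
  finally show ?thesis .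
qed

subsection \<open>Row-standard fillings and inversion pairs\<close>

lemma row_standardD:
  assumes "row_standard lam tau"
  shows "inj_on tau (boxes lam)" "tau ` boxes lam = {1..size_of lam}"
    "(i, j) \<in> boxes lam \<Longrightarrow> (i, j') \<in> boxes lam \<Longrightarrow> j < j' \<Longrightarrow> tau (i, j) < tau (i, j')"
    "c \<notin> boxes lam \<Longrightarrow> tau c = 0"
  using assms unfolding row_standard_def bij_betw_def by blast+

lemma finite_row_standard_fillings: "finite (row_standard_fillings lam)"
proof -
  have "row_standard_fillings lam \<subseteq>
      {f. \<forall>x. (x \<in> boxes lam \<longrightarrow> f x \<in> {1..size_of lam}) \<and> (x \<notin> boxes lam \<longrightarrow> f x = 0)}"
    unfolding row_standard_fillings_def row_standard_def bij_betw_def by auto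
  then show ?thesis
    by (rule finite_subset) (intro finite_set_of_finite_funs finite_boxes finite_atLeastAtMost)
qed

lemma coeff_inversion_gf: "coeff (inversion_gf lam) k = int (card (S lam k))"
proof -
  have "coeff (inversion_gf lam) k = (\<Sum>tau\<in>row_standard_fillings lam. if inv_count lam tau = k then 1 else 0)"
    unfolding inversion_gf_def coeff_sum coeff_monom by (intro sum.cong) auto
  also have "\<dots> = (\<Sum>tau\<in>{tau \<in> row_standard_fillings lam. inv_count lam tau = k}. 1)"
    by (rule sum.inter_filter[OF finite_row_standard_fillings, symmetric])
  also have "\<dots> = int (card (S lam k))"
    unfolding S_def row_standard_fillings_def by simp
  finally show ?thesis .
qed

lemma inversion_gf_size_0: "size_of lam = 0 \<Longrightarrow> inversion_gf lam = 1"
proof -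
  assume "size_of lam = 0"
  then have "boxes lam = {}" unfolding boxes_def using size_of_eq_0_nth by auto
  then have "row_standard_fillings lam = {\<lambda>_. 0}" and "inv_count lam (\<lambda>_. 0) = 0"
    using \<open>size_of lam = 0\<close>
    unfolding row_standard_fillings_def row_standard_def inv_count_def inversion_pair_def
    by (auto simp: bij_betw_def)
  then show ?thesis unfolding inversion_gf_def by simp
qed

definition successor_inverted ::
    "nat list \<Rightarrow> (nat \<times> nat \<Rightarrow> nat) \<Rightarrow> nat \<times> nat \<Rightarrow> nat \<times> nat \<Rightarrow> bool" where
  "successor_inverted lam tau c c' \<longleftrightarrow>
     (right_of c 1 \<notin> boxes lam \<or> right_of c' 1 \<notin> boxes lam) \<and> fst c' < fst c
     \<or> right_of c 1 \<in> boxes lam \<and> right_of c' 1 \<in> boxes lam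
       \<and> tau (right_of c' 1) < tau (right_of c 1)"

text \<open>In a row-standard filling distinct boxes carry distinct entries, so the comparison defining
  an inversion pair already stops at the right neighbours.\<close>

lemma first_diff_eq_1:
  assumes "row_standard lam tau" "c \<in> boxes lam" "c' \<in> boxes lam" "c \<noteq> c'" "snd c = snd c'"
  shows "first_diff lam tau c c' = 1"
  unfolding first_diff_def
proof (rule Least_equality)
  have "right_of c 1 \<noteq> right_of c' 1" using assms(4,5) unfolding right_of_def by (auto simp: prod_eq_iff)
  then show "1 \<le> (1::nat) \<and> (right_of c 1 \<notin> boxes lam \<or> right_of c' 1 \<notin> boxes lam
       \<or> tau (right_of c 1) \<noteq> tau (right_of c' 1))"
    using row_standardD(1)[OF assms(1)] by (auto dest: inj_onD)
qed simp

lemma inversion_pair_iff: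
  assumes "row_standard lam tau"
  shows "inversion_pair lam tau c c' \<longleftrightarrow>
    c \<in> boxes lam \<and> c' \<in> boxes lam \<and> c \<noteq> c' \<and> snd c = snd c' \<and> tau c < tau c' \<and>
    successor_inverted lam tau c c'"
  using first_diff_eq_1[OF assms, of c c']
  unfolding inversion_pair_def successor_inverted_def Let_def by auto

lemma finite_inversion_pairs: "finite {(c, c'). inversion_pair lam tau c c'}"
  by (rule finite_subset[of _ "boxes lam \<times> boxes lam"]) (auto simp: inversion_pair_def finite_boxes)

subsection \<open>Removing the box with the largest entry\<close>

definition block_end :: "nat list \<Rightarrow> nat \<Rightarrow> nat" where
  "block_end lam s = (GREATEST i. i < length lam \<and> lam ! i = lam ! s)"

text \<open>Row \<open>g\<close> of \<open>lam'\<close> is placed at position \<open>s\<close> and rows \<open>s, \<dots>, g - 1\<close> of \<open>lam'\<close> move down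
  by one; this turns \<open>lam'\<close> into \<open>lam\<close> with the box \<open>corner\<close> at the end of row \<open>s\<close> removed.\<close>

locale corner_removal =
  fixes lam :: "nat list" and s :: nat
  assumes decreasing: "weakly_decreasing lam"
    and s_less_length: "s < length lam" and row_pos: "0 < lam ! s"
begin

definition "l = lam ! s"
definition "g = block_end lam s"
definition "lam' = remove_box lam g"
definition "N = size_of lam"
definition "corner = (s, l - 1)"
definition "row_embed i = (if i = g then s else if s \<le> i \<and> i < g then Suc i else i)"
definition "row_unembed i = (if i = s then g else if s < i \<and> i \<le> g then i - 1 else i)"
definition "box_embed z = (row_embed (fst z), snd z)"
definition "box_unembed w = (row_unembed (fst w), snd w)"
definition "extend sig = (\<lambda>w. if w = corner then N else if w \<in> boxes lam then sig (box_unembed w) else 0)"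
definition "restrict tau = (\<lambda>z. if z \<in> boxes lam' then tau (box_embed z) else 0)"

lemma g_props: "g < length lam" "lam ! g = l" "s \<le> g"
proof -
  let ?P = "\<lambda>i. i < length lam \<and> lam ! i = lam ! s"
  have "?P (Greatest ?P)" by (rule GreatestI_nat[of _ s "length lam"]) (use s_less_length in auto)
  moreover have "s \<le> Greatest ?P" by (rule Greatest_le_nat[of _ s "length lam"]) (use s_less_length in auto)
  ultimately show "g < length lam" "lam ! g = l" "s \<le> g" unfolding g_def block_end_def l_def by auto
qed

lemma l_pos: "0 < l"
  using row_pos unfolding l_def .

lemma l_le_iff: "i < length lam \<Longrightarrow> l \<le> lam ! i \<longleftrightarrow> i \<le> g"
proof
  assume i: "i < length lam" and "l \<le> lam ! i"
  show "i \<le> g"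
  proof (rule ccontr)
    assume "\<not> i \<le> g"
    then have "lam ! i = l"
      using weakly_decreasingD[OF decreasing, of s i] i g_props \<open>l \<le> lam ! i\<close> unfolding l_def by simp
    then show False
      using Greatest_le_nat[of "\<lambda>i. i < length lam \<and> lam ! i = lam ! s" i "length lam"] i \<open>\<not> i \<le> g\<close>
      unfolding g_def block_end_def l_def by simp
  qed
next
  assume "i < length lam" "i \<le> g"
  then show "l \<le> lam ! i" using weakly_decreasingD[OF decreasing, of i g] g_props by simp
qed

lemma nth_eq_l: "s \<le> i \<Longrightarrow> i \<le> g \<Longrightarrow> lam ! i = l"
  using weakly_decreasingD[OF decreasing, of s i] weakly_decreasingD[OF decreasing, of i g] g_props
  unfolding l_def by fastforce

lemma nth_lam': "lam' ! i = (if i = g then l - 1 else lam ! i)"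
  unfolding lam'_def remove_box_def using g_props by (simp add: nth_list_update)

lemma length_lam' [simp]: "length lam' = length lam"
  unfolding lam'_def by simp

lemma size_of_lam': "size_of lam' = N - 1"
  unfolding lam'_def N_def using size_of_remove_box[of g lam] g_props l_pos by simp

lemma N_pos: "1 \<le> N"
  using elem_le_sum_list[OF s_less_length] row_pos unfolding N_def size_of_def by simp

lemma row_unembed_embed [simp]: "row_unembed (row_embed i) = i"
  unfolding row_unembed_def row_embed_def using g_props by auto

lemma row_embed_unembed [simp]: "row_embed (row_unembed i) = i"
  unfolding row_unembed_def row_embed_def using g_props by auto

lemma box_unembed_embed [simp]: "box_unembed (box_embed z) = z"
  unfolding box_unembed_def box_embed_def by simp

lemma box_embed_unembed [simp]: "box_embed (box_unembed z) = z"
  unfolding box_unembed_def box_embed_def by simp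

lemma box_embed_eq_iff: "box_embed x = box_embed y \<longleftrightarrow> x = y"
  by (metis box_unembed_embed)

lemma snd_box_embed [simp]: "snd (box_embed z) = snd z"
  unfolding box_embed_def by simp

lemma corner_in_boxes: "corner \<in> boxes lam"
  unfolding corner_def mem_boxes using s_less_length l_pos unfolding l_def by simp

lemma mem_boxes_lam'_iff: "z \<in> boxes lam' \<longleftrightarrow> box_embed z \<in> boxes lam \<and> box_embed z \<noteq> corner"
proof -
  obtain i j where z: "z = (i, j)" by (cases z)
  consider "i = g" | "s \<le> i" "i < g" | "i \<noteq> g" "\<not> (s \<le> i \<and> i < g)" by linarith
  then show ?thesis
  proof cases
    case 1
    then show ?thesis
      unfolding z box_embed_def row_embed_def corner_def mem_boxes using g_props l_pos s_less_length
      by (auto simp: nth_lam' l_def)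
  next
    case 2
    then have "lam ! Suc i = l" "lam ! i = l" using nth_eq_l by auto
    then show ?thesis unfolding z box_embed_def row_embed_def corner_def mem_boxes using 2 g_props
      by (auto simp: nth_lam')
  next
    case 3
    then have "i \<noteq> s" using g_props by auto
    then show ?thesis unfolding z box_embed_def row_embed_def corner_def mem_boxes using 3
      by (auto simp: nth_lam')
  qed
qed

lemma box_embed_in_boxes: "z \<in> boxes lam' \<Longrightarrow> box_embed z \<in> boxes lam"
  using mem_boxes_lam'_iff by blast

lemma box_embed_neq_corner: "z \<in> boxes lam' \<Longrightarrow> box_embed z \<noteq> corner"
  using mem_boxes_lam'_iff by blast

lemma box_unembed_in_boxes: "w \<in> boxes lam \<Longrightarrow> w \<noteq> corner \<Longrightarrow> box_unembed w \<in> boxes lam'"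
  using mem_boxes_lam'_iff[of "box_unembed w"] by simp

lemma boxes_lam_eq: "boxes lam = insert corner (box_embed ` boxes lam')"
proof (intro equalityI subsetI)
  fix w assume "w \<in> boxes lam"
  then show "w \<in> insert corner (box_embed ` boxes lam')"
    using box_unembed_in_boxes[of w] by (metis box_embed_unembed image_eqI insertCI)
qed (use corner_in_boxes box_embed_in_boxes in auto)

lemma extend_corner: "extend sig corner = N"
  unfolding extend_def by simp

lemma extend_box_embed: "z \<in> boxes lam' \<Longrightarrow> extend sig (box_embed z) = sig z"
  unfolding extend_def using box_embed_neq_corner box_embed_in_boxes by simp

lemma extend_less_N:
  assumes "row_standard lam' sig" "w \<in> boxes lam" "w \<noteq> corner"
  shows "extend sig w < N"
proof -
  have "box_unembed w \<in> boxes lam'" using box_unembed_in_boxes assms(2,3) by simp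
  then have "sig (box_unembed w) \<in> {1..N - 1}" using row_standardD(2)[OF assms(1)] size_of_lam' by auto
  then have "sig (box_unembed w) < N" using N_pos by auto
  then show ?thesis using extend_box_embed[OF \<open>box_unembed w \<in> _\<close>] by simp
qed

lemma extend_inj_on:
  assumes sig: "row_standard lam' sig"
  shows "inj_on (extend sig) (boxes lam)"
proof (rule inj_onI)
  fix w1 w2 assume w: "w1 \<in> boxes lam" "w2 \<in> boxes lam" and eq: "extend sig w1 = extend sig w2"
  have "w1 = corner \<longleftrightarrow> w2 = corner"
    using eq extend_less_N[OF sig] w by (metis extend_corner less_irrefl)
  moreover have "w1 = w2" if "w1 \<noteq> corner" "w2 \<noteq> corner"
  proof -
    have b: "box_unembed w1 \<in> boxes lam'" "box_unembed w2 \<in> boxes lam'"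
      using box_unembed_in_boxes w that by auto
    then have "sig (box_unembed w1) = sig (box_unembed w2)"
      using eq extend_box_embed[OF b(1)] extend_box_embed[OF b(2)] by simp
    then have "box_unembed w1 = box_unembed w2" using row_standardD(1)[OF sig] b by (auto dest: inj_onD)
    then show ?thesis by (metis box_embed_unembed)
  qed
  ultimately show "w1 = w2" by blast
qed

lemma extend_row_standard:
  assumes sig: "row_standard lam' sig"
  shows "row_standard lam (extend sig)"
proof -
  have "extend sig ` boxes lam = insert N (sig ` boxes lam')"
    unfolding boxes_lam_eq by (simp add: extend_corner image_image extend_box_embed cong: image_cong)
  then have img: "extend sig ` boxes lam = {1..N}"
    using row_standardD(2)[OF sig] size_of_lam' N_pos by auto
  have rows: "extend sig (i, j) < extend sig (i, j')"
    if ij: "(i, j) \<in> boxes lam" "(i, j') \<in> boxes lam" "j < j'" for i j j'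
  proof (cases "(i, j') = corner")
    case True
    moreover have "(i, j) \<noteq> corner" using ij True unfolding corner_def by auto
    ultimately show ?thesis using extend_less_N[OF sig] ij by (simp add: extend_corner)
  next
    case False
    moreover have "(i, j) \<noteq> corner" using ij unfolding corner_def l_def mem_boxes by auto
    ultimately have "box_unembed (i, j) \<in> boxes lam'" "box_unembed (i, j') \<in> boxes lam'"
      using box_unembed_in_boxes ij by auto
    moreover have "sig (box_unembed (i, j)) < sig (box_unembed (i, j'))"
      using row_standardD(3)[OF sig, of "row_unembed i" j j'] calculation ij(3)
      unfolding box_unembed_def by auto
    ultimately show ?thesis by (metis box_embed_unembed extend_box_embed)
  qed
  show ?thesis
    unfolding row_standard_def bij_betw_def N_def[symmetric]
    using extend_inj_on[OF sig] img rows by (auto simp: extend_def corner_in_boxes)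
qed

lemma restrict_row_standard:
  assumes tau: "row_standard lam tau" and corner: "tau corner = N"
  shows "row_standard lam' (restrict tau)"
proof -
  have inj: "inj_on (restrict tau) (boxes lam')"
    using row_standardD(1)[OF tau] box_embed_in_boxes
    by (intro inj_onI) (auto simp: restrict_def box_embed_eq_iff dest: inj_onD)
  have "restrict tau ` boxes lam' = tau ` (boxes lam - {corner})"
    unfolding boxes_lam_eq restrict_def
    using box_embed_neq_corner by (force simp: image_image)
  also have "\<dots> = {1..size_of lam'}"
    using row_standardD(1,2)[OF tau] corner corner_in_boxes size_of_lam' N_pos
    by (simp add: inj_on_image_set_diff N_def) fastforce
  finally have img: "restrict tau ` boxes lam' = {1..size_of lam'}" .
  have rows: "restrict tau (i, j) < restrict tau (i, j')"
    if "(i, j) \<in> boxes lam'" "(i, j') \<in> boxes lam'" "j < j'" for i j j'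
    using that box_embed_in_boxes row_standardD(3)[OF tau, of "row_embed i" j j']
    unfolding restrict_def box_embed_def by auto
  show ?thesis
    unfolding row_standard_def bij_betw_def using inj img rows by (auto simp: restrict_def)
qed

lemma restrict_extend: "row_standard lam' sig \<Longrightarrow> restrict (extend sig) = sig"
  using extend_box_embed row_standardD(4) unfolding restrict_def by fastforce

lemma extend_restrict: "row_standard lam tau \<Longrightarrow> tau corner = N \<Longrightarrow> extend (restrict tau) = tau"
  using box_unembed_in_boxes row_standardD(4) unfolding extend_def restrict_def by fastforce

lemma right_of_box_embed: "right_of (box_embed z) 1 = box_embed (right_of z 1)"
  unfolding right_of_def box_embed_def by simp

lemma right_of_box_embed_eq_corner:
  "right_of (box_embed z) 1 = corner \<longleftrightarrow> fst z = g \<and> snd z + 2 = l"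
proof -
  have "right_of (box_embed z) 1 = corner \<longleftrightarrow> right_of z 1 = box_unembed corner"
    unfolding right_of_box_embed by (metis box_embed_unembed box_unembed_embed)
  also have "box_unembed corner = (g, l - 1)"
    unfolding box_unembed_def corner_def row_unembed_def by simp
  finally show ?thesis unfolding right_of_def using l_pos by (cases z) auto
qed

lemma right_of_box_embed_in_boxes:
  "right_of (box_embed z) 1 \<in> boxes lam \<longleftrightarrow> right_of z 1 \<in> boxes lam' \<or> fst z = g \<and> snd z + 2 = l"
  using mem_boxes_lam'_iff[of "right_of z 1"] right_of_box_embed_eq_corner[of z] corner_in_boxes
  unfolding right_of_box_embed by auto

lemma extend_right_of_box_embed:
  "right_of z 1 \<in> boxes lam' \<Longrightarrow> extend sig (right_of (box_embed z) 1) = sig (right_of z 1)"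
  unfolding right_of_box_embed by (rule extend_box_embed)

lemma extend_right_of_box_embed_less_N:
  "row_standard lam' sig \<Longrightarrow> right_of z 1 \<in> boxes lam' \<Longrightarrow> extend sig (right_of (box_embed z) 1) < N"
  unfolding right_of_box_embed
  by (intro extend_less_N box_embed_in_boxes box_embed_neq_corner)

lemma successor_inverted_extend_left_corner:
  assumes sig: "row_standard lam' sig" and y: "(b, j) \<in> boxes lam'" and "b \<noteq> g" "j + 2 = l"
  shows "successor_inverted lam (extend sig) (box_embed (g, j)) (box_embed (b, j))
    \<longleftrightarrow> successor_inverted lam' sig (g, j) (b, j)"
proof -
  have Rx: "right_of (box_embed (g, j)) 1 = corner" "right_of (g, j) 1 \<notin> boxes lam'"
    using right_of_box_embed_eq_corner assms by (auto simp: right_of_def mem_boxes nth_lam')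
  have Ry: "right_of (b, j) 1 \<in> boxes lam' \<longleftrightarrow> b < g"
    using assms l_le_iff[of b] by (auto simp: right_of_def mem_boxes nth_lam')
  then have Ry': "right_of (box_embed (b, j)) 1 \<in> boxes lam \<longleftrightarrow> b < g"
    using right_of_box_embed_in_boxes[of "(b, j)"] assms by simp
  have "s < b" if "\<not> b < g" using that assms g_props by simp
  then show ?thesis
    unfolding successor_inverted_def
    using Rx Ry Ry' corner_in_boxes extend_corner extend_right_of_box_embed_less_N[OF sig, of "(b, j)"]
    by (auto simp: box_embed_def row_embed_def)
qed

lemma successor_inverted_extend_right_corner:
  assumes sig: "row_standard lam' sig" and x: "(a, j) \<in> boxes lam'" and "a \<noteq> g" "j + 2 = l"
  shows "successor_inverted lam (extend sig) (box_embed (a, j)) (box_embed (g, j))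
    \<longleftrightarrow> successor_inverted lam' sig (a, j) (g, j)"
proof -
  have Ry: "right_of (box_embed (g, j)) 1 = corner" "right_of (g, j) 1 \<notin> boxes lam'"
    using right_of_box_embed_eq_corner assms by (auto simp: right_of_def mem_boxes nth_lam')
  have Rx: "right_of (a, j) 1 \<in> boxes lam' \<longleftrightarrow> a < g"
    using assms l_le_iff[of a] by (auto simp: right_of_def mem_boxes nth_lam')
  then have Rx': "right_of (box_embed (a, j)) 1 \<in> boxes lam \<longleftrightarrow> a < g"
    using right_of_box_embed_in_boxes[of "(a, j)"] assms by simp
  have "s < a" if "\<not> a < g" using that assms g_props by simp
  then show ?thesis
    unfolding successor_inverted_def
    using Rx Rx' Ry corner_in_boxes extend_corner extend_right_of_box_embed_less_N[OF sig, of "(a, j)"]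
    by (auto simp: box_embed_def row_embed_def)
qed

text \<open>Away from the corner, \<open>row_embed\<close> only reverses the relative order of row \<open>g\<close> and the
  rows \<open>s, \<dots>, g - 1\<close>; for such a pair both right neighbours exist, so row order is not consulted.\<close>

lemma successor_inverted_extend_generic:
  assumes sig: "row_standard lam' sig" and x: "(a, j) \<in> boxes lam'" and y: "(b, j) \<in> boxes lam'"
    and "a \<noteq> b" "\<not> (a = g \<and> j + 2 = l)" "\<not> (b = g \<and> j + 2 = l)"
  shows "successor_inverted lam (extend sig) (box_embed (a, j)) (box_embed (b, j))
    \<longleftrightarrow> successor_inverted lam' sig (a, j) (b, j)"
proof -
  let ?Rx = "right_of (a, j) 1" and ?Ry = "right_of (b, j) 1"
  have R: "right_of (box_embed (a, j)) 1 \<in> boxes lam \<longleftrightarrow> ?Rx \<in> boxes lam'"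
    "right_of (box_embed (b, j)) 1 \<in> boxes lam \<longleftrightarrow> ?Ry \<in> boxes lam'"
    using right_of_box_embed_in_boxes assms by auto
  have order: "row_embed b < row_embed a \<longleftrightarrow> b < a" if "\<not> (?Rx \<in> boxes lam' \<and> ?Ry \<in> boxes lam')"
  proof -
    have "?Rx \<in> boxes lam' \<and> ?Ry \<in> boxes lam'"
      if "a = g \<and> s \<le> b \<and> b < g \<or> b = g \<and> s \<le> a \<and> a < g"
      using that assms nth_eq_l g_props by (auto simp: right_of_def mem_boxes nth_lam')
    then show ?thesis using that assms(4) g_props unfolding row_embed_def by auto
  qed
  show ?thesis
  proof (cases "?Rx \<in> boxes lam' \<and> ?Ry \<in> boxes lam'")
    case True
    then show ?thesis unfolding successor_inverted_def using R extend_right_of_box_embed by auto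
  next
    case False
    then show ?thesis unfolding successor_inverted_def using R order[OF False]
      by (auto simp: box_embed_def)
  qed
qed

lemma inversion_pair_extend_iff:
  assumes sig: "row_standard lam' sig" and x: "x \<in> boxes lam'" and y: "y \<in> boxes lam'"
  shows "inversion_pair lam (extend sig) (box_embed x) (box_embed y) \<longleftrightarrow> inversion_pair lam' sig x y"
proof -
  have "successor_inverted lam (extend sig) (box_embed x) (box_embed y) \<longleftrightarrow> successor_inverted lam' sig x y"
    if ne: "x \<noteq> y" and col: "snd x = snd y"
  proof -
    obtain a b j where xy: "x = (a, j)" "y = (b, j)" using col by (cases x, cases y) auto
    then have "a \<noteq> b" using ne by simp
    then consider "a = g" "j + 2 = l" | "b = g" "j + 2 = l"
      | "\<not> (a = g \<and> j + 2 = l)" "\<not> (b = g \<and> j + 2 = l)" by blast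
    then show ?thesis
    proof cases
      case 1
      then show ?thesis using successor_inverted_extend_left_corner[OF sig] y xy \<open>a \<noteq> b\<close> by simp
    next
      case 2
      then show ?thesis using successor_inverted_extend_right_corner[OF sig] x xy \<open>a \<noteq> b\<close> by simp
    next
      case 3
      then show ?thesis using successor_inverted_extend_generic[OF sig] x y xy \<open>a \<noteq> b\<close> by simp
    qed
  qed
  moreover have "box_embed x \<noteq> box_embed y \<longleftrightarrow> x \<noteq> y" using box_embed_eq_iff by blast
  ultimately show ?thesis
    unfolding inversion_pair_iff[OF extend_row_standard[OF sig]] inversion_pair_iff[OF sig]
    using x y box_embed_in_boxes extend_box_embed by auto
qed

lemma right_of_corner_notin_boxes: "right_of corner 1 \<notin> boxes lam"
  unfolding corner_def right_of_def mem_boxes using l_pos unfolding l_def by simp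

lemma inversion_pair_extend_corner:
  assumes sig: "row_standard lam' sig"
  shows "inversion_pair lam (extend sig) c corner \<longleftrightarrow> c \<in> (\<lambda>t. (t, l - 1)) ` {s<..g}"
proof
  assume iv: "inversion_pair lam (extend sig) c corner"
  obtain t j where c: "c = (t, j)" by (cases c)
  have "j = l - 1" "s < t"
    using iv right_of_corner_notin_boxes c
    unfolding inversion_pair_iff[OF extend_row_standard[OF sig]] successor_inverted_def corner_def
    by auto
  moreover have "t \<le> g"
    using iv c \<open>j = l - 1\<close> l_le_iff[of t] l_pos unfolding inversion_pair_def by (auto simp: mem_boxes)
  ultimately show "c \<in> (\<lambda>t. (t, l - 1)) ` {s<..g}" using c by auto
next
  assume "c \<in> (\<lambda>t. (t, l - 1)) ` {s<..g}"
  then obtain t where c: "c = (t, l - 1)" "s < t" "t \<le> g" by auto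
  have tb: "c \<in> boxes lam" using c g_props l_le_iff[of t] l_pos by (auto simp: mem_boxes)
  have tn: "c \<noteq> corner" using c unfolding corner_def by simp
  have "extend sig c < extend sig corner" using extend_less_N[OF sig tb tn] extend_corner by simp
  then show "inversion_pair lam (extend sig) c corner"
    using c tb tn corner_in_boxes right_of_corner_notin_boxes
    unfolding inversion_pair_iff[OF extend_row_standard[OF sig]] successor_inverted_def
    by (auto simp: corner_def)
qed

lemma inversion_pairs_extend:
  assumes sig: "row_standard lam' sig"
  shows "{(c, c'). inversion_pair lam (extend sig) c c'}
    = map_prod box_embed box_embed ` {(x, y). inversion_pair lam' sig x y}
      \<union> (\<lambda>t. ((t, l - 1), corner)) ` {s<..g}"
    (is "?IP = ?f ` ?IP' \<union> ?E")
proof (intro equalityI subsetI)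
  fix p assume "p \<in> ?IP"
  then obtain c c' where p: "p = (c, c')" and iv: "inversion_pair lam (extend sig) c c'" by auto
  show "p \<in> ?f ` ?IP' \<union> ?E"
  proof (cases "c' = corner")
    case True
    then show ?thesis using iv p inversion_pair_extend_corner[OF sig] by auto
  next
    case False
    have cb: "c \<in> boxes lam" "c' \<in> boxes lam" using iv unfolding inversion_pair_def by auto
    then have "c \<noteq> corner"
      using iv extend_less_N[OF sig cb(2) False] extend_corner unfolding inversion_pair_def by auto
    then have b: "box_unembed c \<in> boxes lam'" "box_unembed c' \<in> boxes lam'"
      using box_unembed_in_boxes cb False by auto
    have "inversion_pair lam' sig (box_unembed c) (box_unembed c')"
      using inversion_pair_extend_iff[OF sig b] iv by simp
    then show ?thesis using p by (auto intro!: image_eqI[of _ _ "(box_unembed c, box_unembed c')"])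
  qed
next
  fix p assume "p \<in> ?f ` ?IP' \<union> ?E"
  then consider x y where "p = (box_embed x, box_embed y)" "inversion_pair lam' sig x y"
    | t where "p = ((t, l - 1), corner)" "s < t" "t \<le> g" by auto
  then show "p \<in> ?IP"
  proof cases
    case 1
    then have "x \<in> boxes lam'" "y \<in> boxes lam'" unfolding inversion_pair_def by auto
    then show ?thesis using 1 inversion_pair_extend_iff[OF sig] by simp
  qed (use inversion_pair_extend_corner[OF sig] in auto)
qed

lemma inv_count_extend:
  assumes sig: "row_standard lam' sig"
  shows "inv_count lam (extend sig) = inv_count lam' sig + (g - s)"
proof -
  let ?IP' = "{(x, y). inversion_pair lam' sig x y}"
  let ?E = "(\<lambda>t. ((t, l - 1), corner)) ` {s<..g}"
  have inj: "inj_on (map_prod box_embed box_embed) ?IP'"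
    by (rule inj_onI) (auto simp: box_embed_eq_iff)
  have "snd q \<noteq> corner" if "q \<in> map_prod box_embed box_embed ` ?IP'" for q
    using that box_embed_neq_corner unfolding inversion_pair_def by auto
  moreover have "snd q = corner" if "q \<in> ?E" for q using that by auto
  ultimately have disj: "map_prod box_embed box_embed ` ?IP' \<inter> ?E = {}" by blast
  have "inv_count lam (extend sig) = card (map_prod box_embed box_embed ` ?IP') + card ?E"
    unfolding inv_count_def inversion_pairs_extend[OF sig]
    by (rule card_Un_disjoint) (use finite_inversion_pairs disj in auto)
  also have "\<dots> = inv_count lam' sig + (g - s)"
    unfolding inv_count_def card_image[OF inj] by (subst card_image) (auto simp: inj_on_def)
  finally show ?thesis .
qed

lemma sum_fillings_corner_N:
  "(\<Sum>tau\<in>{tau \<in> row_standard_fillings lam. tau corner = N}. monom (1::int) (inv_count lam tau))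
    = monom 1 (g - s) * inversion_gf lam'"
proof -
  have "(\<Sum>tau\<in>{tau \<in> row_standard_fillings lam. tau corner = N}. monom (1::int) (inv_count lam tau))
      = (\<Sum>sig\<in>row_standard_fillings lam'. monom 1 (inv_count lam (extend sig)))"
    by (rule sum.reindex_bij_witness[of _ extend restrict])
       (auto simp: row_standard_fillings_def extend_restrict restrict_row_standard restrict_extend
          extend_row_standard extend_corner)
  also have "\<dots> = (\<Sum>sig\<in>row_standard_fillings lam'. monom 1 (g - s) * monom 1 (inv_count lam' sig))"
    by (intro sum.cong refl)
       (simp add: inv_count_extend row_standard_fillings_def mult_monom add.commute)
  also have "\<dots> = monom 1 (g - s) * inversion_gf lam'"
    unfolding inversion_gf_def by (simp add: sum_distrib_left)
  finally show ?thesis .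
qed

lemma weakly_decreasing_lam': "weakly_decreasing lam'"
  unfolding weakly_decreasing_def
proof (intro allI impI)
  fix i j assume ij: "i \<le> j" "j < length lam'"
  show "lam' ! j \<le> lam' ! i"
  proof (cases "j = g")
    case True
    then show ?thesis using ij weakly_decreasingD[OF decreasing, of i g] g_props by (auto simp: nth_lam')
  next
    case False
    moreover have "lam ! j < l" if "i = g" using that ij False l_le_iff[of j] by simp
    ultimately show ?thesis using weakly_decreasingD[OF decreasing, of i j] ij by (auto simp: nth_lam')
  qed
qed

lemma block_end_removable: "block_end lam s \<in> removable_rows lam"
  using g_props weakly_decreasing_lam' l_pos unfolding removable_rows_def g_def[symmetric] lam'_def by simp

end

subsection \<open>The recursion for fillings\<close>

definition nonempty_rows :: "nat list \<Rightarrow> nat set" where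
  "nonempty_rows lam = {s. s < length lam \<and> 0 < lam ! s}"

lemma finite_nonempty_rows: "finite (nonempty_rows lam)"
  by (rule finite_subset[of _ "{..<length lam}"]) (auto simp: nonempty_rows_def)

lemma corner_removal_nonempty_row:
  "weakly_decreasing lam \<Longrightarrow> s \<in> nonempty_rows lam \<Longrightarrow> corner_removal lam s"
  unfolding nonempty_rows_def by unfold_locales auto

lemma removable_row_nth_less:
  assumes lam: "weakly_decreasing lam" and gR: "g \<in> removable_rows lam" and j: "g < j" "j < length lam"
  shows "lam ! j < lam ! g"
proof -
  have g: "g < length lam" "0 < lam ! g" and dg: "weakly_decreasing (remove_box lam g)"
    using gR unfolding removable_rows_def by auto
  have "remove_box lam g ! Suc g \<le> remove_box lam g ! g"
    using weakly_decreasingD[OF dg, of g "Suc g"] j by simp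
  then have "lam ! Suc g < lam ! g" using g j unfolding remove_box_def by (simp add: nth_list_update)
  moreover have "lam ! j \<le> lam ! Suc g" using weakly_decreasingD[OF lam] j by simp
  ultimately show ?thesis by simp
qed

lemma block_end_eq_removable_iff:
  assumes lam: "weakly_decreasing lam" and gR: "g \<in> removable_rows lam" and s: "s < length lam"
  shows "block_end lam s = g \<longleftrightarrow> lam ! s = lam ! g"
proof
  assume "block_end lam s = g"
  moreover have "lam ! (block_end lam s) = lam ! s" unfolding block_end_def
    by (rule GreatestI_nat[of _ s "length lam", THEN conjunct2]) (use s in auto)
  ultimately show "lam ! s = lam ! g" by simp
next
  assume eq: "lam ! s = lam ! g"
  show "block_end lam s = g" unfolding block_end_def
  proof (rule Greatest_equality)
    fix y assume "y < length lam \<and> lam ! y = lam ! s"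
    then show "y \<le> g" using removable_row_nth_less[OF lam gR] eq by (metis less_irrefl not_le_imp_less)
  qed (use gR eq in \<open>simp add: removable_rows_def\<close>)
qed

lemma block_end_fibre:
  assumes lam: "weakly_decreasing lam" and gR: "g \<in> removable_rows lam"
  shows "{s \<in> nonempty_rows lam. block_end lam s = g} = {g - corner_degree lam g..g}"
    and "corner_degree lam g \<le> g"
proof -
  have g: "g < length lam" and pos: "0 < lam ! g" using gR unfolding removable_rows_def by auto
  let ?P = "\<lambda>d. d \<le> g \<and> (\<forall>t\<le>d. map int lam ! (g - t) = map int lam ! g)"
  have Pd: "?P (corner_degree lam g)" unfolding corner_degree_def by (rule GreatestI_nat[of _ 0 g]) auto
  then show "corner_degree lam g \<le> g" by simp
  show "{s \<in> nonempty_rows lam. block_end lam s = g} = {g - corner_degree lam g..g}"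
  proof (intro equalityI subsetI)
    fix s assume "s \<in> {s \<in> nonempty_rows lam. block_end lam s = g}"
    then have s: "s < length lam" "lam ! s = lam ! g"
      using block_end_eq_removable_iff[OF lam gR] unfolding nonempty_rows_def by auto
    then have sg: "s \<le> g" using removable_row_nth_less[OF lam gR] by (metis less_irrefl not_le_imp_less)
    have "?P (g - s)"
    proof (intro conjI allI impI)
      fix t assume "t \<le> g - s"
      then have "lam ! g \<le> lam ! (g - t)" "lam ! (g - t) \<le> lam ! s"
        using weakly_decreasingD[OF lam, of "g - t" g] weakly_decreasingD[OF lam, of s "g - t"] g sg
        by auto
      then show "map int lam ! (g - t) = map int lam ! g" using s g by simp
    qed simp
    then have "g - s \<le> corner_degree lam g"
      unfolding corner_degree_def by (rule Greatest_le_nat[of _ _ g]) simp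
    then show "s \<in> {g - corner_degree lam g..g}" using sg by simp
  next
    fix s assume s: "s \<in> {g - corner_degree lam g..g}"
    then have "g - s \<le> corner_degree lam g" by auto
    then have "map int lam ! (g - (g - s)) = map int lam ! g" using Pd by blast
    then have "lam ! s = lam ! g" using s g by simp
    then show "s \<in> {s \<in> nonempty_rows lam. block_end lam s = g}"
      using block_end_eq_removable_iff[OF lam gR] s g pos unfolding nonempty_rows_def by simp
  qed
qed

lemma sum_monom_block: "d \<le> g \<Longrightarrow> (\<Sum>s\<in>{g - d..g}. monom (1::int) (g - s)) = qint (d + 1)"
  unfolding qint_def
  by (rule sum.reindex_bij_witness[of _ "\<lambda>i. g - i" "\<lambda>s. g - s"]) auto

lemma row_standard_max_entry:
  assumes tau: "row_standard lam tau" and sz: "size_of lam = Suc n"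
  obtains s where "s \<in> nonempty_rows lam" "tau (s, lam ! s - 1) = size_of lam"
proof -
  have "size_of lam \<in> tau ` boxes lam" using row_standardD(2)[OF tau] sz by simp
  then obtain i j where ij: "(i, j) \<in> boxes lam" "tau (i, j) = size_of lam" by auto
  have "\<not> Suc j < lam ! i"
  proof
    assume "Suc j < lam ! i"
    then have "tau (i, j) < tau (i, Suc j)" "tau (i, Suc j) \<le> size_of lam"
      using row_standardD(2,3)[OF tau] ij(1) by (auto simp: mem_boxes)
    then show False using ij(2) by simp
  qed
  then have "j = lam ! i - 1" using ij(1) unfolding mem_boxes by arith
  then show ?thesis using that[of i] ij unfolding nonempty_rows_def by (auto simp: mem_boxes)
qed

lemma row_standard_max_entry_unique:
  assumes tau: "row_standard lam tau" and "s \<in> nonempty_rows lam" "s' \<in> nonempty_rows lam"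
    and "tau (s, lam ! s - 1) = size_of lam" "tau (s', lam ! s' - 1) = size_of lam"
  shows "s = s'"
  using assms inj_onD[OF row_standardD(1)[OF tau], of "(s, lam ! s - 1)" "(s', lam ! s' - 1)"]
  unfolding nonempty_rows_def by (auto simp: mem_boxes)

definition max_entry_row :: "nat list \<Rightarrow> (nat \<times> nat \<Rightarrow> nat) \<Rightarrow> nat" where
  "max_entry_row lam tau = (THE s. s \<in> nonempty_rows lam \<and> tau (s, lam ! s - 1) = size_of lam)"

lemma max_entry_row_eq_iff:
  assumes tau: "row_standard lam tau" and sz: "size_of lam = Suc n" and s: "s \<in> nonempty_rows lam"
  shows "max_entry_row lam tau = s \<longleftrightarrow> tau (s, lam ! s - 1) = size_of lam"
proof -
  obtain s0 where s0: "s0 \<in> nonempty_rows lam" "tau (s0, lam ! s0 - 1) = size_of lam"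
    using row_standard_max_entry[OF tau sz] .
  then have "max_entry_row lam tau = s0" unfolding max_entry_row_def
    using row_standard_max_entry_unique[OF tau] by (intro the_equality) blast+
  then show ?thesis using row_standard_max_entry_unique[OF tau] s s0 by blast
qed

lemma max_entry_row_in_nonempty_rows:
  assumes tau: "row_standard lam tau" and sz: "size_of lam = Suc n"
  shows "max_entry_row lam tau \<in> nonempty_rows lam"
  using row_standard_max_entry[OF tau sz] max_entry_row_eq_iff[OF tau sz] by metis

lemma sum_fillings_max_entry_row:
  assumes lam: "weakly_decreasing lam" and sz: "size_of lam = Suc n" and s: "s \<in> nonempty_rows lam"
  shows "(\<Sum>tau\<in>{tau \<in> row_standard_fillings lam. max_entry_row lam tau = s}. monom 1 (inv_count lam tau))
    = monom 1 (block_end lam s - s) * inversion_gf (remove_box lam (block_end lam s))"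
proof -
  interpret corner_removal lam s by (rule corner_removal_nonempty_row[OF lam s])
  have "{tau \<in> row_standard_fillings lam. max_entry_row lam tau = s}
      = {tau \<in> row_standard_fillings lam. tau corner = N}"
    unfolding corner_def l_def N_def row_standard_fillings_def
    using max_entry_row_eq_iff[OF _ sz s] by auto
  then show ?thesis using sum_fillings_corner_N unfolding g_def lam'_def by simp
qed

lemma sum_block_end_fibre:
  assumes lam: "weakly_decreasing lam" and gR: "g \<in> removable_rows lam"
  shows "(\<Sum>s\<in>{s \<in> nonempty_rows lam. block_end lam s = g}.
      monom 1 (block_end lam s - s) * inversion_gf (remove_box lam (block_end lam s)))
    = qint (corner_degree lam g + 1) * inversion_gf (remove_box lam g)"
proof -
  have "(\<Sum>s\<in>{s \<in> nonempty_rows lam. block_end lam s = g}.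
      monom 1 (block_end lam s - s) * inversion_gf (remove_box lam (block_end lam s)))
    = (\<Sum>s\<in>{g - corner_degree lam g..g}. monom 1 (g - s)) * inversion_gf (remove_box lam g)"
    unfolding block_end_fibre(1)[OF lam gR, symmetric] sum_distrib_right by (rule sum.cong) auto
  then show ?thesis using sum_monom_block[OF block_end_fibre(2)[OF lam gR]] by simp
qed

lemma inversion_gf_rec:
  assumes lam: "weakly_decreasing lam" and sz: "size_of lam = Suc n"
  shows "inversion_gf lam
    = (\<Sum>g\<in>removable_rows lam. qint (corner_degree lam g + 1) * inversion_gf (remove_box lam g))"
proof -
  have "max_entry_row lam ` row_standard_fillings lam \<subseteq> nonempty_rows lam"
    using max_entry_row_in_nonempty_rows[OF _ sz] unfolding row_standard_fillings_def by blast
  then have "inversion_gf lam = (\<Sum>s\<in>nonempty_rows lam.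
      \<Sum>tau\<in>{tau \<in> row_standard_fillings lam. max_entry_row lam tau = s}. monom 1 (inv_count lam tau))"
    unfolding inversion_gf_def
    by (rule sum.group[OF finite_row_standard_fillings finite_nonempty_rows, symmetric])
  also have "\<dots> = (\<Sum>s\<in>nonempty_rows lam.
      monom 1 (block_end lam s - s) * inversion_gf (remove_box lam (block_end lam s)))"
    by (intro sum.cong refl sum_fillings_max_entry_row[OF lam sz])
  also have "\<dots> = (\<Sum>g\<in>removable_rows lam. \<Sum>s\<in>{s \<in> nonempty_rows lam. block_end lam s = g}.
      monom 1 (block_end lam s - s) * inversion_gf (remove_box lam (block_end lam s)))"
    by (rule sum.group[OF finite_nonempty_rows finite_removable_rows, symmetric])
       (use corner_removal.block_end_removable[OF corner_removal_nonempty_row[OF lam]] in blast)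
  also have "\<dots> = (\<Sum>g\<in>removable_rows lam. qint (corner_degree lam g + 1) * inversion_gf (remove_box lam g))"
    by (intro sum.cong refl sum_block_end_fibre[OF lam])
  finally show ?thesis .
qed

theorem dyck_gf_eq_inversion_gf: "weakly_decreasing lam \<Longrightarrow> dyck_gf lam = inversion_gf lam"
proof (induction "size_of lam" arbitrary: lam)
  case 0
  then show ?case using dyck_gf_size_0 inversion_gf_size_0 by simp
next
  case (Suc n)
  have "dyck_gf (remove_box lam g) = inversion_gf (remove_box lam g)" if "g \<in> removable_rows lam" for g
    using that Suc size_of_remove_box unfolding removable_rows_def by auto
  then show ?case
    unfolding dyck_gf_rec[OF Suc(3) Suc(2)[symmetric]] inversion_gf_rec[OF Suc(3) Suc(2)[symmetric]]
    by (intro sum.cong) auto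
qed

theorem mainTheorem14:
  fixes lam :: "nat list"
  assumes "is_shape lam"
  shows "\<forall>k. coeff (\<Sum>is \<in> {is. length is = length lam - 1 \<and> (\<forall>x \<in> set is. x \<le> size_of lam)}.
                  of_nat (card (D_ret lam is)) * (\<Prod>j = 1..length lam - 1. qint (j + 1) ^ (is ! (j - 1)))) k
             = int (card (S lam k))"
proof -
  have lam: "weakly_decreasing lam"
    using assms unfolding is_shape_def weakly_decreasing_def by blast
  show ?thesis
    unfolding sum_D_ret_eq_dyck_gf[OF finite_dyck_paths[OF lam]] dyck_gf_eq_inversion_gf[OF lam]
    by (simp add: coeff_inversion_gf)
qed

end
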